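(* Let $\beta_0>0$ and let $(X_{k,j})_{k\in\mathbb{N},\,j\in\{1,\dots,2^k\}}$ be real random variables such that: (i) $\mathbb{E}[\exp(\beta_0|X_{0,1}|)]<\infty$ and $\mathbb{E}[X_{0,1}]=0$; (ii) for all $k,j$, $X_{k,j}$ has the same distribution as $2^{-k}X_{0,1}$; (iii) for each fixed $k$, the variables $(X_{k,j})_{1\le j\le2^k}$ are independent. Then $\sum_{k=0}^n\sum_{j=1}^{2^k}X_{k,j}$ converges almost surely as $n\to\infty$, and its limit $X$ satisfies $\mathbb{E}[\exp(\beta X)]<\infty$ for every $\beta$ with $|\beta|<\beta_0/2$. *)

theory Defs
  imports "HOL-Probability.Probability"
begin

end

theory Submission
  imports Defs
begin

text \<open>
  Let S_k be the sum of level k. Its 2^k summands are independent copies of Y/2^k with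
  Y = X_{0,1}, so a second order Taylor bound for the centred variable Y gives the
  sub-Gaussian estimate E exp(t S_k) \<le> exp(C t^2 / 2^k) for |t| \<le> \<rho> 2^k, for every \<rho> < \<beta>0.
  With t = \<plusminus>\<rho> this yields E S_k^2 = O(2^-k), hence \<Sum> E|S_k| < \<infinity> and almost sure convergence.
  For the exponential moment write \<beta> \<Sum>_{k\<le>n} S_k = \<Sum> w_k (\<beta>/w_k) S_k with \<Sum> w_k \<le> 1: convexity
  of exp bounds E exp(\<beta> \<Sum>_{k\<le>n} S_k) uniformly in n as soon as |\<beta>|/w_k \<le> \<rho> 2^k and
  \<beta>^2/(2^k w_k^2) stays bounded, and such weights exist for 2|\<beta>| < \<rho>. Fatou's lemma passes to
  the limit. No independence between different levels is needed.
\<close>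

lemma exp_le_quadratic_taylor: "exp (x::real) \<le> 1 + x + x\<^sup>2 / 2 * exp \<bar>x\<bar>"
proof -
  obtain t where t: "\<bar>t\<bar> \<le> \<bar>x\<bar>" "exp x = (\<Sum>m<2. x^m / fact m) + exp t / fact 2 * x\<^sup>2"
    using Maclaurin_exp_le[of x 2] by blast
  have "exp t / 2 * x\<^sup>2 \<le> exp \<bar>x\<bar> / 2 * x\<^sup>2"
    using t(1) by (intro mult_right_mono) auto
  thus ?thesis using t(2) by (simp add: numeral_2_eq_2 mult_ac)
qed

lemma two_plus_square_le_exp_plus_exp_minus: "2 + (x::real)\<^sup>2 \<le> exp x + exp (-x)"
proof -
  have cubic: "1 + y + y\<^sup>2/2 + y^3/6 \<le> exp y" for y :: real
  proof -
    obtain t where "exp y = (\<Sum>m<4. y^m / fact m) + exp t / fact 4 * y^4"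
      using Maclaurin_exp_le[of y 4] by blast
    moreover have "0 \<le> exp t / fact 4 * y^4" by simp
    ultimately show ?thesis by (simp add: eval_nat_numeral)
  qed
  from cubic[of x] cubic[of "-x"] show ?thesis by (simp add: power2_eq_square power3_eq_cube)
qed

lemma square_le_exp_abs: "(x::real)\<^sup>2 \<le> exp \<bar>x\<bar>"
proof -
  have "exp (-\<bar>x\<bar>) \<le> 1" by simp
  thus ?thesis using two_plus_square_le_exp_plus_exp_minus[of "\<bar>x\<bar>"] by (simp del: exp_le_one_iff)
qed

lemma exp_minus_one_le_mult_exp: "0 \<le> (a::real) \<Longrightarrow> exp a - 1 \<le> a * exp a"
  using exp_ge_add_one_self[of "-a"] mult_right_mono[of "1 - a" "exp (-a)" "exp a"]
  by (simp add: exp_minus field_simps)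

lemma exp_weighted_sum_le:
  fixes w z :: "nat \<Rightarrow> real"
  assumes "\<And>k. k \<le> n \<Longrightarrow> 0 \<le> w k" "(\<Sum>k\<le>n. w k) \<le> 1"
  shows "exp (\<Sum>k\<le>n. w k * z k) \<le> (\<Sum>k\<le>n. w k * exp (z k)) + (1 - (\<Sum>k\<le>n. w k))"
proof -
  \<comment> \<open>Jensen's inequality for exp, with the missing weight put on the point 0.\<close>
  define a where "a k = (if k \<le> n then w k else 1 - (\<Sum>k\<le>n. w k))" for k
  define y where "y k = (if k \<le> n then z k else 0)" for k
  have "(\<Sum>k\<le>n. a k) = (\<Sum>k\<le>n. w k)" "(\<Sum>k\<le>n. a k * y k) = (\<Sum>k\<le>n. w k * z k)"
    "(\<Sum>k\<le>n. a k * exp (y k)) = (\<Sum>k\<le>n. w k * exp (z k))"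
    by (auto simp: a_def y_def intro!: sum.cong)
  moreover have "exp (\<Sum>k\<le>Suc n. a k *\<^sub>R y k) \<le> (\<Sum>k\<le>Suc n. a k * exp (y k))"
    using assms by (intro convex_on_sum[OF _ _ exp_convex]) (auto simp: a_def)
  ultimately show ?thesis by (simp add: a_def y_def)
qed

lemma dyadic_weights_exist:
  fixes b \<rho> :: real
  assumes "0 \<le> b" "2 * b < \<rho>"
  obtains c :: real and w :: "nat \<Rightarrow> real" where "0 < c" "\<And>k. 0 < w k" "\<And>n. (\<Sum>k\<le>n. w k) \<le> 1"
    "\<And>k. b \<le> \<rho> * 2^k * w k" "\<And>k. c\<^sup>2 \<le> 2^k * (w k)\<^sup>2"
proof -
  \<comment> \<open>The first summand of w keeps b / w k below \<rho> * 2^k, the second keeps 2^k * (w k)^2 away from 0.\<close>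
  define c where "c = (1 - 2 * b / \<rho>) / 4"
  define w :: "nat \<Rightarrow> real" where "w k = b / \<rho> * (1/2)^k + c * (3/4)^k" for k
  have \<rho>: "0 < \<rho>" using assms by linarith
  have c: "0 < c" using assms \<rho> by (simp add: c_def field_simps)
  have w_ge: "c * (3/4)^k \<le> w k" for k
  proof -
    have "0 \<le> b / \<rho> * (1/2)^k" using assms \<rho> by simp
    thus ?thesis unfolding w_def by linarith
  qed
  show ?thesis
  proof (rule that[of c w])
    show "0 < c" by (rule c)
    show "0 < w k" for k
    proof -
      have "0 < c * (3/4)^k" using c by simp
      thus ?thesis using w_ge[of k] by linarith
    qed
    show "(\<Sum>k\<le>n. w k) \<le> 1" for n
    proof -
      have geom: "(\<Sum>k\<le>n. q^k) \<le> 1 / (1 - q)" if "0 \<le> q" "q < 1" for q :: real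
        using sum_le_suminf[OF summable_geometric[of q], of "{..n}"] suminf_geometric[of q] that by auto
      have "(\<Sum>k\<le>n. w k) = b / \<rho> * (\<Sum>k\<le>n. (1/2)^k) + c * (\<Sum>k\<le>n. (3/4)^k)"
        by (simp add: w_def sum.distrib sum_distrib_left)
      also have "\<dots> \<le> b / \<rho> * 2 + c * 4"
        using geom[of "1/2"] geom[of "3/4"] assms \<rho> c by (intro add_mono mult_left_mono) auto
      also have "\<dots> = 1" using \<rho> by (simp add: c_def field_simps)
      finally show ?thesis .
    qed
    show "b \<le> \<rho> * 2^k * w k" for k
    proof -
      have "b = \<rho> * 2^k * (b / \<rho> * (1/2)^k)" using \<rho> by (simp add: power_one_over)
      also have "\<dots> \<le> \<rho> * 2^k * w k"
        using \<rho> c by (intro mult_left_mono) (auto simp: w_def)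
      finally show ?thesis .
    qed
    show "c\<^sup>2 \<le> 2^k * (w k)\<^sup>2" for k
    proof -
      have "(2::real)^k * ((3/4)^k)\<^sup>2 = (2 * (3/4)\<^sup>2)^k"
        by (metis power_mult power_mult_distrib mult.commute)
      hence "c\<^sup>2 * (9/8)^k = 2^k * (c * (3/4)^k)\<^sup>2"
        by (simp add: power2_eq_square power_mult_distrib)
      moreover have "c\<^sup>2 * 1 \<le> c\<^sup>2 * (9/8)^k" by (intro mult_left_mono one_le_power) auto
      moreover have "2^k * (c * (3/4)^k)\<^sup>2 \<le> 2^k * (w k)\<^sup>2"
        using w_ge[of k] c by (intro mult_left_mono power_mono) auto
      ultimately show ?thesis by linarith
    qed
  qed
qed

lemma integral_le_of_nn_integral_le:
  fixes f :: "'a \<Rightarrow> real"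
  assumes "f \<in> borel_measurable M" "\<And>x. 0 \<le> f x" "(\<integral>\<^sup>+x. f x \<partial>M) \<le> ennreal b" "0 \<le> b"
  shows "integrable M f" "integral\<^sup>L M f \<le> b"
proof -
  show f: "integrable M f"
    using assms by (intro integrableI_nonneg) (auto intro: le_less_trans[OF _ ennreal_less_top])
  have "ennreal (integral\<^sup>L M f) \<le> ennreal b"
    using assms f by (subst nn_integral_eq_integral[symmetric]) auto
  thus "integral\<^sup>L M f \<le> b" using assms(4) by simp
qed

lemma AE_summable_of_nn_integral_abs_le:
  fixes S :: "nat \<Rightarrow> 'a \<Rightarrow> real"
  assumes S: "\<And>k. S k \<in> borel_measurable M"
    and b: "\<And>k. (\<integral>\<^sup>+\<omega>. \<bar>S k \<omega>\<bar> \<partial>M) \<le> ennreal (b k)" "\<And>k. 0 \<le> b k" "summable b"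
  shows "AE \<omega> in M. summable (\<lambda>k. S k \<omega>)"
proof -
  have "(\<integral>\<^sup>+\<omega>. (\<Sum>k. ennreal \<bar>S k \<omega>\<bar>) \<partial>M) = (\<Sum>k. \<integral>\<^sup>+\<omega>. \<bar>S k \<omega>\<bar> \<partial>M)"
    using S by (intro nn_integral_suminf) auto
  also have "\<dots> \<le> (\<Sum>k. ennreal (b k))"
    using b(1) by (intro suminf_le) auto
  also have "\<dots> = ennreal (\<Sum>k. b k)"
    using b(2,3) by (rule suminf_ennreal2)
  finally have "(\<integral>\<^sup>+\<omega>. (\<Sum>k. ennreal \<bar>S k \<omega>\<bar>) \<partial>M) \<noteq> \<infinity>"
    using ennreal_less_top by (metis infinity_ennreal_def leD)
  hence "AE \<omega> in M. (\<Sum>k. ennreal \<bar>S k \<omega>\<bar>) \<noteq> \<infinity>"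
    using S by (intro nn_integral_noteq_infinite) auto
  thus ?thesis
  proof eventually_elim
    fix \<omega> assume "(\<Sum>k. ennreal \<bar>S k \<omega>\<bar>) \<noteq> \<infinity>"
    hence "summable (\<lambda>k. \<bar>S k \<omega>\<bar>)" by (intro summable_suminf_not_top) auto
    thus "summable (\<lambda>k. S k \<omega>)" by (rule summable_rabs_cancel)
  qed
qed

lemma integrable_exp_of_AE_tendsto:
  fixes F :: "nat \<Rightarrow> 'a \<Rightarrow> real"
  assumes F: "\<And>n. F n \<in> borel_measurable M" "\<And>n. (\<integral>\<^sup>+\<omega>. exp (F n \<omega>) \<partial>M) \<le> ennreal B"
    and G: "G \<in> borel_measurable M" "AE \<omega> in M. (\<lambda>n. F n \<omega>) \<longlonglongrightarrow> G \<omega>"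
  shows "integrable M (\<lambda>\<omega>. exp (G \<omega>))"
proof (rule integrableI_nonneg)
  have "AE \<omega> in M. liminf (\<lambda>n. ennreal (exp (F n \<omega>))) = ennreal (exp (G \<omega>))"
    using G(2)
  proof eventually_elim
    fix \<omega> assume "(\<lambda>n. F n \<omega>) \<longlonglongrightarrow> G \<omega>"
    hence "(\<lambda>n. ennreal (exp (F n \<omega>))) \<longlonglongrightarrow> ennreal (exp (G \<omega>))"
      by (intro tendsto_ennrealI tendsto_exp)
    thus "liminf (\<lambda>n. ennreal (exp (F n \<omega>))) = ennreal (exp (G \<omega>))"
      by (intro lim_imp_Liminf) auto
  qed
  hence "(\<integral>\<^sup>+\<omega>. exp (G \<omega>) \<partial>M) = (\<integral>\<^sup>+\<omega>. liminf (\<lambda>n. ennreal (exp (F n \<omega>))) \<partial>M)"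
    by (intro nn_integral_cong_AE) (auto elim: AE_mp)
  also have "\<dots> \<le> liminf (\<lambda>n. \<integral>\<^sup>+\<omega>. exp (F n \<omega>) \<partial>M)"
    using F(1) by (intro nn_integral_liminf) auto
  also have "\<dots> \<le> ennreal B"
    using F(2) by (intro order_trans[OF Liminf_le_Limsup Limsup_bounded] always_eventually) auto
  finally show "(\<integral>\<^sup>+\<omega>. exp (G \<omega>) \<partial>M) < \<infinity>"
    using ennreal_less_top[of B] by (metis infinity_ennreal_def le_less_trans)
qed (use G(1) in auto)

context prob_space
begin

lemma centered_mgf_le_quadratic:
  fixes Y :: "'a \<Rightarrow> real"
  assumes Y: "Y \<in> borel_measurable M" "integrable M (\<lambda>\<omega>. exp (\<beta>0 * \<bar>Y \<omega>\<bar>))"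
    "integrable M Y" "expectation Y = 0"
    and \<rho>: "0 < \<rho>" "\<rho> < \<beta>0"
  obtains C where "0 \<le> C" "\<And>u. \<bar>u\<bar> \<le> \<rho> \<Longrightarrow> (\<integral>\<^sup>+\<omega>. exp (u * Y \<omega>) \<partial>M) \<le> ennreal (1 + C * u\<^sup>2)"
proof
  define g where "g \<omega> = (Y \<omega>)\<^sup>2 * exp (\<rho> * \<bar>Y \<omega>\<bar>) / 2" for \<omega>
  have g_le: "\<bar>g \<omega>\<bar> \<le> exp (\<beta>0 * \<bar>Y \<omega>\<bar>) / (\<beta>0 - \<rho>)\<^sup>2" for \<omega>
  proof -
    have "(\<beta>0 - \<rho>)\<^sup>2 * (Y \<omega>)\<^sup>2 \<le> exp ((\<beta>0 - \<rho>) * \<bar>Y \<omega>\<bar>)"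
      using square_le_exp_abs[of "(\<beta>0 - \<rho>) * \<bar>Y \<omega>\<bar>"] \<rho> by (simp add: power_mult_distrib)
    hence Y_sq: "(Y \<omega>)\<^sup>2 \<le> exp ((\<beta>0 - \<rho>) * \<bar>Y \<omega>\<bar>) / (\<beta>0 - \<rho>)\<^sup>2"
      using \<rho> by (simp add: pos_le_divide_eq mult.commute)
    have "\<bar>g \<omega>\<bar> \<le> (Y \<omega>)\<^sup>2 * exp (\<rho> * \<bar>Y \<omega>\<bar>)" by (simp add: g_def)
    also have "\<dots> \<le> exp ((\<beta>0 - \<rho>) * \<bar>Y \<omega>\<bar>) / (\<beta>0 - \<rho>)\<^sup>2 * exp (\<rho> * \<bar>Y \<omega>\<bar>)"
      using Y_sq by (intro mult_right_mono) auto
    also have "\<dots> = exp (\<beta>0 * \<bar>Y \<omega>\<bar>) / (\<beta>0 - \<rho>)\<^sup>2"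
      by (simp add: exp_add[symmetric] algebra_simps)
    finally show ?thesis .
  qed
  have "g \<in> borel_measurable M" unfolding g_def[abs_def] using Y(1) by measurable
  hence g: "integrable M g"
    using g_le \<rho> by (intro Bochner_Integration.integrable_bound[OF integrable_divide[OF Y(2), of "(\<beta>0 - \<rho>)\<^sup>2"]]) auto
  show "0 \<le> expectation g" by (simp add: g_def)
  fix u :: real assume u: "\<bar>u\<bar> \<le> \<rho>"
  have pointwise: "exp (u * Y \<omega>) \<le> 1 + u * Y \<omega> + u\<^sup>2 * g \<omega>" for \<omega>
  proof -
    have "exp \<bar>u * Y \<omega>\<bar> \<le> exp (\<rho> * \<bar>Y \<omega>\<bar>)"
      using u by (simp add: abs_mult mult_right_mono)
    hence "(u * Y \<omega>)\<^sup>2 / 2 * exp \<bar>u * Y \<omega>\<bar> \<le> (u * Y \<omega>)\<^sup>2 / 2 * exp (\<rho> * \<bar>Y \<omega>\<bar>)"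
      by (intro mult_left_mono) auto
    also have "\<dots> = u\<^sup>2 * g \<omega>"
      by (simp add: g_def power_mult_distrib)
    finally show ?thesis
      using exp_le_quadratic_taylor[of "u * Y \<omega>"] by linarith
  qed
  have "(\<integral>\<^sup>+\<omega>. exp (u * Y \<omega>) \<partial>M) \<le> (\<integral>\<^sup>+\<omega>. ennreal (1 + u * Y \<omega> + u\<^sup>2 * g \<omega>) \<partial>M)"
    by (intro nn_integral_mono ennreal_leI pointwise)
  also have "\<dots> = ennreal (\<integral>\<omega>. 1 + u * Y \<omega> + u\<^sup>2 * g \<omega> \<partial>M)"
    using g Y pointwise by (intro nn_integral_eq_integral)
      (auto intro: order_trans[OF less_imp_le[OF exp_gt_zero]])
  also have "(\<integral>\<omega>. 1 + u * Y \<omega> + u\<^sup>2 * g \<omega> \<partial>M) = 1 + expectation g * u\<^sup>2"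
    using g Y by (simp add: prob_space)
  finally show "(\<integral>\<^sup>+\<omega>. exp (u * Y \<omega>) \<partial>M) \<le> ennreal (1 + expectation g * u\<^sup>2)" .
qed

lemma nn_integral_exp_sum_indep_le:
  fixes Z :: "'i \<Rightarrow> 'a \<Rightarrow> real" and a :: real
  assumes Z: "indep_vars (\<lambda>_. borel) Z I" "finite I"
    and a: "0 \<le> a" "\<And>j. j \<in> I \<Longrightarrow> (\<integral>\<^sup>+\<omega>. exp (Z j \<omega>) \<partial>M) \<le> ennreal (1 + a)"
  shows "(\<integral>\<^sup>+\<omega>. exp (\<Sum>j\<in>I. Z j \<omega>) \<partial>M) \<le> ennreal (exp (real (card I) * a))"
proof -
  have "(\<integral>\<^sup>+\<omega>. exp (\<Sum>j\<in>I. Z j \<omega>) \<partial>M) = (\<integral>\<^sup>+\<omega>. (\<Prod>j\<in>I. ennreal (exp (Z j \<omega>))) \<partial>M)"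
    using Z(2) by (simp add: exp_sum prod_ennreal)
  also have "\<dots> = (\<Prod>j\<in>I. \<integral>\<^sup>+\<omega>. exp (Z j \<omega>) \<partial>M)"
    using Z by (intro indep_vars_nn_integral indep_vars_compose2[OF Z(1)]) auto
  also have "\<dots> \<le> (\<Prod>j\<in>I. ennreal (1 + a))"
    using a by (intro prod_mono_ennreal) auto
  also have "\<dots> = ennreal ((1 + a) ^ card I)"
    using a by (simp del: ennreal_plus add: ennreal_power)
  also have "\<dots> \<le> ennreal (exp a ^ card I)"
    using a by (intro ennreal_leI power_mono) auto
  also have "exp a ^ card I = exp (real (card I) * a)"
    by (simp add: exp_of_nat_mult)
  finally show ?thesis .
qed

lemma nn_integral_exp_sum_iid_le:
  fixes Y :: "'a \<Rightarrow> real" and Z :: "'i \<Rightarrow> 'a \<Rightarrow> real"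
  assumes Y: "Y \<in> borel_measurable M" "0 \<le> C"
      "\<And>u. \<bar>u\<bar> \<le> \<rho> \<Longrightarrow> (\<integral>\<^sup>+\<omega>. exp (u * Y \<omega>) \<partial>M) \<le> ennreal (1 + C * u\<^sup>2)"
    and Z: "indep_vars (\<lambda>_. borel) Z I" "finite I"
      "\<And>j. j \<in> I \<Longrightarrow> distr M borel (Z j) = distr M borel (\<lambda>\<omega>. Y \<omega> / card I)"
    and t: "\<bar>t\<bar> \<le> \<rho> * card I"
  shows "(\<integral>\<^sup>+\<omega>. exp (t * (\<Sum>j\<in>I. Z j \<omega>)) \<partial>M) \<le> ennreal (exp (C * t\<^sup>2 / card I))"
proof -
  have each: "(\<integral>\<^sup>+\<omega>. exp (t * Z j \<omega>) \<partial>M) \<le> ennreal (1 + C * (t / card I)\<^sup>2)" if j: "j \<in> I" for j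
  proof -
    have "card I > 0" using j Z(2) card_gt_0_iff by blast
    hence u: "\<bar>t / card I\<bar> \<le> \<rho>" using t by (simp add: abs_divide divide_le_eq)
    have "Z j \<in> borel_measurable M" using Z(1) j by (auto simp: indep_vars_def)
    hence "(\<integral>\<^sup>+\<omega>. exp (t * Z j \<omega>) \<partial>M) = (\<integral>\<^sup>+x. exp (t * x) \<partial>distr M borel (Z j))"
      by (simp add: nn_integral_distr)
    also have "\<dots> = (\<integral>\<^sup>+x. exp (t * x) \<partial>distr M borel (\<lambda>\<omega>. Y \<omega> / card I))"
      using Z(3)[OF j] by simp
    also have "\<dots> = (\<integral>\<^sup>+\<omega>. exp (t / card I * Y \<omega>) \<partial>M)"
      using Y(1) by (simp add: nn_integral_distr)
    also have "\<dots> \<le> ennreal (1 + C * (t / card I)\<^sup>2)"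
      by (rule Y(3)[OF u])
    finally show ?thesis .
  qed
  have "(\<integral>\<^sup>+\<omega>. exp (\<Sum>j\<in>I. t * Z j \<omega>) \<partial>M) \<le> ennreal (exp (real (card I) * (C * (t / card I)\<^sup>2)))"
    using Z Y(2) each by (intro nn_integral_exp_sum_indep_le indep_vars_compose2[OF Z(1)]) auto
  also have "real (card I) * (C * (t / card I)\<^sup>2) = C * t\<^sup>2 / card I"
    by (simp add: power_divide power2_eq_square)
  finally show ?thesis by (simp add: sum_distrib_left)
qed

lemma nn_integral_square_le_of_mgf:
  fixes S :: "'a \<Rightarrow> real"
  assumes S: "S \<in> borel_measurable M" and \<rho>: "0 < \<rho>" and a: "0 \<le> a"
    and mgf: "(\<integral>\<^sup>+\<omega>. exp (\<rho> * S \<omega>) \<partial>M) \<le> ennreal (exp a)"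
      "(\<integral>\<^sup>+\<omega>. exp (- \<rho> * S \<omega>) \<partial>M) \<le> ennreal (exp a)"
  shows "(\<integral>\<^sup>+\<omega>. (S \<omega>)\<^sup>2 \<partial>M) \<le> ennreal (2 * a * exp a / \<rho>\<^sup>2)"
proof -
  define q where "q \<omega> = (exp (\<rho> * S \<omega>) + exp (- \<rho> * S \<omega>) - 2) / \<rho>\<^sup>2" for \<omega>
  note pos = integral_le_of_nn_integral_le[OF _ _ mgf(1)] and neg = integral_le_of_nn_integral_le[OF _ _ mgf(2)]
  have q: "integrable M q"
    using pos neg S unfolding q_def by auto
  have S_sq: "(S \<omega>)\<^sup>2 \<le> q \<omega>" for \<omega>
    using two_plus_square_le_exp_plus_exp_minus[of "\<rho> * S \<omega>"] \<rho>
    by (simp add: q_def field_simps power_mult_distrib)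
  hence "(\<integral>\<^sup>+\<omega>. (S \<omega>)\<^sup>2 \<partial>M) \<le> (\<integral>\<^sup>+\<omega>. q \<omega> \<partial>M)"
    by (intro nn_integral_mono ennreal_leI)
  also have "\<dots> = ennreal (expectation q)"
    using q S_sq by (intro nn_integral_eq_integral) (auto intro: order_trans[OF zero_le_power2])
  also have "expectation q = (expectation (\<lambda>\<omega>. exp (\<rho> * S \<omega>)) + expectation (\<lambda>\<omega>. exp (- \<rho> * S \<omega>)) - 2) / \<rho>\<^sup>2"
    using pos neg S by (simp add: q_def[abs_def] prob_space Bochner_Integration.integral_diff)
  also have "\<dots> \<le> (2 * exp a - 2) / \<rho>\<^sup>2"
    using pos neg S by (intro divide_right_mono) auto
  also have "\<dots> \<le> 2 * a * exp a / \<rho>\<^sup>2"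
    using exp_minus_one_le_mult_exp[OF a] by (intro divide_right_mono) auto
  finally show ?thesis by (simp add: ennreal_leI)
qed

lemma nn_integral_abs_le_sqrt:
  fixes S :: "'a \<Rightarrow> real"
  assumes S: "S \<in> borel_measurable M" and V: "(\<integral>\<^sup>+\<omega>. (S \<omega>)\<^sup>2 \<partial>M) \<le> ennreal V" "0 \<le> V"
  shows "(\<integral>\<^sup>+\<omega>. \<bar>S \<omega>\<bar> \<partial>M) \<le> ennreal (sqrt V)"
proof -
  have "(\<integral>\<^sup>+\<omega>. ennreal \<bar>S \<omega>\<bar> * 1 \<partial>M)\<^sup>2 \<le> (\<integral>\<^sup>+\<omega>. (ennreal \<bar>S \<omega>\<bar>)\<^sup>2 \<partial>M) * (\<integral>\<^sup>+\<omega>. 1\<^sup>2 \<partial>M)"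
    using S by (intro Cauchy_Schwarz_nn_integral) auto
  also have "\<dots> \<le> ennreal V"
    using V by (simp add: ennreal_power emeasure_space_1)
  finally have CS: "(\<integral>\<^sup>+\<omega>. \<bar>S \<omega>\<bar> \<partial>M)\<^sup>2 \<le> ennreal V" by simp
  show ?thesis
  proof (cases "\<integral>\<^sup>+\<omega>. \<bar>S \<omega>\<bar> \<partial>M" rule: ennreal_cases)
    case (real r)
    hence "r\<^sup>2 \<le> V" using CS V by (simp add: ennreal_power)
    hence "r \<le> sqrt V" by (rule real_le_rsqrt)
    thus ?thesis using real ennreal_leI by simp
  qed (use CS in \<open>simp add: top_unique\<close>)
qed

lemma nn_integral_exp_sum_le_of_weights:
  fixes S :: "nat \<Rightarrow> 'a \<Rightarrow> real" and w :: "nat \<Rightarrow> real"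
  assumes S: "\<And>k. S k \<in> borel_measurable M"
    and w: "\<And>k. k \<le> n \<Longrightarrow> 0 < w k" "(\<Sum>k\<le>n. w k) \<le> 1"
    and B: "0 \<le> B" "\<And>k. k \<le> n \<Longrightarrow> (\<integral>\<^sup>+\<omega>. exp (S k \<omega> / w k) \<partial>M) \<le> ennreal B"
  shows "(\<integral>\<^sup>+\<omega>. exp (\<Sum>k\<le>n. S k \<omega>) \<partial>M) \<le> ennreal (B + 1)"
proof -
  define R where "R \<omega> = (\<Sum>k\<le>n. w k * exp (S k \<omega> / w k)) + (1 - (\<Sum>k\<le>n. w k))" for \<omega>
  have int: "integrable M (\<lambda>\<omega>. exp (S k \<omega> / w k))" "expectation (\<lambda>\<omega>. exp (S k \<omega> / w k)) \<le> B"
    if "k \<le> n" for k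
    using integral_le_of_nn_integral_le[OF _ _ B(2)[OF that] B(1)] S by auto
  have R_ge: "exp (\<Sum>k\<le>n. S k \<omega>) \<le> R \<omega>" for \<omega>
  proof -
    have "(\<Sum>k\<le>n. S k \<omega>) = (\<Sum>k\<le>n. w k * (S k \<omega> / w k))"
      using w(1) by (intro sum.cong) (auto simp: less_imp_neq[symmetric])
    thus ?thesis
      unfolding R_def using exp_weighted_sum_le[of n w "\<lambda>k. S k \<omega> / w k", OF _ w(2)] w(1)
      by (simp only:) (simp add: less_imp_le)
  qed
  have R: "integrable M R"
    unfolding R_def[abs_def] using int
    by (intro Bochner_Integration.integrable_add integrable_sum integrable_mult_right integrable_const) auto
  have "(\<integral>\<^sup>+\<omega>. exp (\<Sum>k\<le>n. S k \<omega>) \<partial>M) \<le> (\<integral>\<^sup>+\<omega>. R \<omega> \<partial>M)"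
    by (intro nn_integral_mono ennreal_leI R_ge)
  also have "\<dots> = ennreal (expectation R)"
    using R R_ge by (intro nn_integral_eq_integral) (auto intro: order_trans[OF less_imp_le[OF exp_gt_zero]])
  also have "expectation R = (\<Sum>k\<le>n. w k * expectation (\<lambda>\<omega>. exp (S k \<omega> / w k))) + (1 - (\<Sum>k\<le>n. w k))"
    unfolding R_def[abs_def] using int
    by (subst Bochner_Integration.integral_add) (auto simp: integral_sum prob_space)
  also have "\<dots> \<le> (\<Sum>k\<le>n. w k * B) + 1"
    using int w(1) sum_nonneg[of "{..n}" w] by (intro add_mono sum_mono mult_left_mono) (auto simp: less_imp_le)
  also have "\<dots> = (\<Sum>k\<le>n. w k) * B + 1"
    by (simp add: sum_distrib_right)
  also have "\<dots> \<le> B + 1"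
    using w B(1) sum_nonneg[of "{..n}" w] by (simp add: mult_left_le_one_le less_imp_le)
  finally show ?thesis by (simp add: ennreal_leI)
qed

lemma AE_convergent_of_dyadic_mgf:
  fixes S :: "nat \<Rightarrow> 'a \<Rightarrow> real"
  assumes S: "\<And>k. S k \<in> borel_measurable M" and \<rho>: "0 < \<rho>" and C: "0 \<le> C"
    and mgf: "\<And>k t. \<bar>t\<bar> \<le> \<rho> * 2^k \<Longrightarrow> (\<integral>\<^sup>+\<omega>. exp (t * S k \<omega>) \<partial>M) \<le> ennreal (exp (C * t\<^sup>2 / 2^k))"
  shows "AE \<omega> in M. convergent (\<lambda>n. \<Sum>k\<le>n. S k \<omega>)"
proof -
  define D where "D = 2 * C * exp (C * \<rho>\<^sup>2)"
  have D: "0 \<le> D" using C by (simp add: D_def)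
  have square: "(\<integral>\<^sup>+\<omega>. (S k \<omega>)\<^sup>2 \<partial>M) \<le> ennreal (D / 2^k)" for k
  proof -
    define a where "a = C * \<rho>\<^sup>2 / 2^k"
    have "C * \<rho>\<^sup>2 / 2^k \<le> C * \<rho>\<^sup>2 / 1"
      using C by (intro divide_left_mono) auto
    hence a: "0 \<le> a" "a \<le> C * \<rho>\<^sup>2"
      using C by (auto simp: a_def)
    have "\<bar>\<rho>\<bar> \<le> \<rho> * 2^k" "\<bar>- \<rho>\<bar> \<le> \<rho> * 2^k" using \<rho> by auto
    from mgf[OF this(1)] mgf[OF this(2)]
    have "(\<integral>\<^sup>+\<omega>. (S k \<omega>)\<^sup>2 \<partial>M) \<le> ennreal (2 * a * exp a / \<rho>\<^sup>2)"
      using S \<rho> a by (intro nn_integral_square_le_of_mgf) (auto simp: a_def)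
    also have "2 * a * exp a / \<rho>\<^sup>2 \<le> D / 2^k"
      using a C \<rho> by (simp add: a_def D_def field_simps mult_left_mono)
    finally show ?thesis by (simp add: ennreal_leI)
  qed
  have "AE \<omega> in M. summable (\<lambda>k. S k \<omega>)"
  proof (rule AE_summable_of_nn_integral_abs_le[OF S])
    show "(\<integral>\<^sup>+\<omega>. \<bar>S k \<omega>\<bar> \<partial>M) \<le> ennreal (sqrt (D / 2^k))" for k
      using S square D by (intro nn_integral_abs_le_sqrt) auto
    have "(\<lambda>k. sqrt (D / 2^k)) = (\<lambda>k. sqrt D * (1 / sqrt 2)^k)"
      by (simp add: power_one_over real_sqrt_divide real_sqrt_power)
    thus "summable (\<lambda>k. sqrt (D / 2^k))"
      by (simp add: summable_mult summable_geometric)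
  qed (use D in auto)
  thus ?thesis by eventually_elim (simp add: summable_iff_convergent')
qed

lemma integrable_exp_lim_of_dyadic_mgf:
  fixes S :: "nat \<Rightarrow> 'a \<Rightarrow> real"
  assumes S: "\<And>k. S k \<in> borel_measurable M" and \<rho>: "0 < \<rho>" and C: "0 \<le> C"
    and mgf: "\<And>k t. \<bar>t\<bar> \<le> \<rho> * 2^k \<Longrightarrow> (\<integral>\<^sup>+\<omega>. exp (t * S k \<omega>) \<partial>M) \<le> ennreal (exp (C * t\<^sup>2 / 2^k))"
    and \<beta>: "2 * \<bar>\<beta>\<bar> < \<rho>"
  shows "integrable M (\<lambda>\<omega>. exp (\<beta> * lim (\<lambda>n. \<Sum>k\<le>n. S k \<omega>)))"
proof -
  obtain c w where c: "0 < c" and w: "\<And>k. 0 < w k" "\<And>n. (\<Sum>k\<le>n. w k) \<le> 1"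
    "\<And>k. \<bar>\<beta>\<bar> \<le> \<rho> * 2^k * w k" "\<And>k. c\<^sup>2 \<le> 2^k * (w k)\<^sup>2"
    using dyadic_weights_exist[of "\<bar>\<beta>\<bar>" \<rho>] \<beta> by auto
  define B where "B = exp (C * \<beta>\<^sup>2 / c\<^sup>2)"
  have level: "(\<integral>\<^sup>+\<omega>. exp (\<beta> * S k \<omega> / w k) \<partial>M) \<le> ennreal B" for k
  proof -
    have "\<bar>\<beta> / w k\<bar> \<le> \<rho> * 2^k"
      using w(1,3)[of k] by (simp add: abs_divide divide_le_eq)
    hence "(\<integral>\<^sup>+\<omega>. exp (\<beta> / w k * S k \<omega>) \<partial>M) \<le> ennreal (exp (C * (\<beta> / w k)\<^sup>2 / 2^k))"
      by (rule mgf)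
    also have "C * (\<beta> / w k)\<^sup>2 / 2^k \<le> C * \<beta>\<^sup>2 / c\<^sup>2"
    proof -
      have "\<beta>\<^sup>2 / (2^k * (w k)\<^sup>2) \<le> \<beta>\<^sup>2 / c\<^sup>2"
        using w(1,4)[of k] c by (intro divide_left_mono) auto
      from mult_left_mono[OF this C] show ?thesis by (simp add: power_divide mult.commute)
    qed
    finally show ?thesis by (simp add: B_def ennreal_leI)
  qed
  have partial: "(\<integral>\<^sup>+\<omega>. exp (\<beta> * (\<Sum>k\<le>n. S k \<omega>)) \<partial>M) \<le> ennreal (B + 1)" for n
    using nn_integral_exp_sum_le_of_weights[of "\<lambda>k \<omega>. \<beta> * S k \<omega>" n w B] S w level
    by (simp add: B_def sum_distrib_left)
  have "AE \<omega> in M. convergent (\<lambda>n. \<Sum>k\<le>n. S k \<omega>)"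
    using S \<rho> C mgf by (rule AE_convergent_of_dyadic_mgf)
  hence "AE \<omega> in M. (\<lambda>n. \<beta> * (\<Sum>k\<le>n. S k \<omega>)) \<longlonglongrightarrow> \<beta> * lim (\<lambda>n. \<Sum>k\<le>n. S k \<omega>)"
    by eventually_elim (intro tendsto_mult_left, simp add: convergent_LIMSEQ_iff)
  with partial show ?thesis
    using S by (intro integrable_exp_of_AE_tendsto) auto
qed

end

theorem proposition9p1:
  fixes M :: "'a measure" and X :: "nat \<Rightarrow> nat \<Rightarrow> 'a \<Rightarrow> real" and \<beta>0 :: real
  assumes "prob_space M"
    and "\<beta>0 > 0"
    and meas: "\<And>k j. j \<in> {1..2^k} \<Longrightarrow> X k j \<in> borel_measurable M"
    and "integrable M (\<lambda>\<omega>. exp (\<beta>0 * \<bar>X 0 1 \<omega>\<bar>))"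
    and "integrable M (X 0 1)"
    and "prob_space.expectation M (X 0 1) = 0"
    and "\<And>k j. j \<in> {1..2^k} \<Longrightarrow>
           distr M borel (X k j) = distr M borel (\<lambda>\<omega>. X 0 1 \<omega> / 2^k)"
    and "\<And>k. prob_space.indep_vars M (\<lambda>_. borel) (X k) {1..2^k}"
  shows "(AE \<omega> in M. convergent (\<lambda>n. \<Sum>k\<le>n. \<Sum>j=1..2^k. X k j \<omega>))
         \<and> (\<forall>\<beta>::real. \<bar>\<beta>\<bar> < \<beta>0 / 2 \<longrightarrow>
              integrable M (\<lambda>\<omega>. exp (\<beta> * lim (\<lambda>n. \<Sum>k\<le>n. \<Sum>j=1..2^k. X k j \<omega>))))"
proof -
  interpret prob_space M by fact
  define S where "S k \<omega> = (\<Sum>j=1..2^k. X k j \<omega>)" for k \<omega>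
  have S: "S k \<in> borel_measurable M" for k
    unfolding S_def[abs_def] using meas by (intro borel_measurable_sum) auto
  have Y: "X 0 1 \<in> borel_measurable M" using meas[of 1 0] by simp
  have card: "real (card {1..(2::nat)^k}) = 2^k" for k by simp
  have dyadic_mgf: "\<exists>C\<ge>0. \<forall>k t. \<bar>t\<bar> \<le> \<rho> * 2^k \<longrightarrow>
      (\<integral>\<^sup>+\<omega>. exp (t * S k \<omega>) \<partial>M) \<le> ennreal (exp (C * t\<^sup>2 / 2^k))"
    if \<rho>: "0 < \<rho>" "\<rho> < \<beta>0" for \<rho>
  proof -
    obtain C where "0 \<le> C" "\<And>u. \<bar>u\<bar> \<le> \<rho> \<Longrightarrow> (\<integral>\<^sup>+\<omega>. exp (u * X 0 1 \<omega>) \<partial>M) \<le> ennreal (1 + C * u\<^sup>2)"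
      using centered_mgf_le_quadratic[OF Y assms(4-6) \<rho>] by blast
    from nn_integral_exp_sum_iid_le[OF Y this assms(8)] show ?thesis
      using \<open>0 \<le> C\<close> assms(7) card by (auto simp: S_def)
  qed
  have "0 < \<beta>0 / 2" "\<beta>0 / 2 < \<beta>0" using assms(2) by auto
  then obtain C where C: "0 \<le> C" "\<And>k t. \<bar>t\<bar> \<le> \<beta>0 / 2 * 2^k \<Longrightarrow>
      (\<integral>\<^sup>+\<omega>. exp (t * S k \<omega>) \<partial>M) \<le> ennreal (exp (C * t\<^sup>2 / 2^k))"
    using dyadic_mgf by blast
  have "AE \<omega> in M. convergent (\<lambda>n. \<Sum>k\<le>n. S k \<omega>)"
    using S \<open>0 < \<beta>0 / 2\<close> C by (rule AE_convergent_of_dyadic_mgf)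
  moreover have "integrable M (\<lambda>\<omega>. exp (\<beta> * lim (\<lambda>n. \<Sum>k\<le>n. S k \<omega>)))"
    if \<beta>: "\<bar>\<beta>\<bar> < \<beta>0 / 2" for \<beta>
  proof -
    \<comment> \<open>Any \<rho> strictly between 2 |\<beta>| and \<beta>0 will do.\<close>
    have "0 < \<bar>\<beta>\<bar> + \<beta>0 / 2" "\<bar>\<beta>\<bar> + \<beta>0 / 2 < \<beta>0" using assms(2) \<beta> by auto
    then obtain C where C: "0 \<le> C" "\<And>k t. \<bar>t\<bar> \<le> (\<bar>\<beta>\<bar> + \<beta>0 / 2) * 2^k \<Longrightarrow>
        (\<integral>\<^sup>+\<omega>. exp (t * S k \<omega>) \<partial>M) \<le> ennreal (exp (C * t\<^sup>2 / 2^k))"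
      using dyadic_mgf by blast
    show ?thesis
      using S \<open>0 < \<bar>\<beta>\<bar> + \<beta>0 / 2\<close> C \<beta> by (intro integrable_exp_lim_of_dyadic_mgf) auto
  qed
  ultimately show ?thesis by (simp add: S_def)
qed

end
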